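(* Let $F\in C^3(\mathbb{R}^n\setminus\{0\})$ be a strongly convex norm on $\mathbb{R}^n$, and let $u$ be a $C^2$ function on an open set $U\subset\mathbb{R}^n$. With the summation convention, $F=F(\nabla u)$, $F_i=F_{\xi_i}(\nabla u)$, $a_{ij}=\frac{\partial^2}{\partial\xi_i\partial\xi_j}(\tfrac12F^2)(\nabla u)=F_iF_j+FF_{\xi_i\xi_j}(\nabla u)$, and $u_{ij}=\partial^2u/\partial x_i\partial x_j$, at every point where $\nabla u\neq0$ one has $$a_{ij}a_{kl}u_{ik}u_{jl}\ge a_{ij}F_kF_lu_{ik}u_{jl}.$$
   Context: A norm on $\mathbb{R}^n$ is a convex, even, positively $1$-homogeneous function $F:\mathbb{R}^n\to[0,\infty)$, $C^1$ away from $0$, positive away from $0$. It is strongly convex if $\mathrm{Hess}(F^2)$ is positive definite on $\mathbb{R}^n\setminus\{0\}$. *)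

theory Defs
  imports "HOL-Analysis.Analysis"
begin

definition partial :: "'n::finite \<Rightarrow> (real^'n \<Rightarrow> real) \<Rightarrow> real^'n \<Rightarrow> real" where
  "partial i f x = frechet_derivative f (at x) (axis i 1)"

definition grad :: "(real^'n::finite \<Rightarrow> real) \<Rightarrow> real^'n \<Rightarrow> real^'n" where
  "grad f x = (\<chi> i. partial i f x)"

definition hess :: "(real^'n::finite \<Rightarrow> real) \<Rightarrow> real^'n \<Rightarrow> 'n \<Rightarrow> 'n \<Rightarrow> real" where
  "hess f x i j = partial j (partial i f) x"

fun Ck_on :: "nat \<Rightarrow> (real^'n::finite) set \<Rightarrow> (real^'n \<Rightarrow> real) \<Rightarrow> bool" where
  "Ck_on 0 S f = continuous_on S f"
| "Ck_on (Suc k) S f = ((\<forall>x\<in>S. f differentiable (at x)) \<and> (\<forall>i. Ck_on k S (partial i f)))"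

definition is_norm_fn :: "(real^'n::finite \<Rightarrow> real) \<Rightarrow> bool" where
  "is_norm_fn F \<longleftrightarrow>
     convex_on UNIV F \<and>
     (\<forall>x. F (- x) = F x) \<and>
     (\<forall>t x. t > 0 \<longrightarrow> F (t *\<^sub>R x) = t * F x) \<and>
     (\<forall>x. F x \<ge> 0) \<and>
     (\<forall>x. x \<noteq> 0 \<longrightarrow> F x > 0) \<and>
     Ck_on 1 (UNIV - {0}) F"

definition strongly_convex_norm :: "(real^'n::finite \<Rightarrow> real) \<Rightarrow> bool" where
  "strongly_convex_norm F \<longleftrightarrow> is_norm_fn F \<and>
     (\<forall>\<xi>. \<xi> \<noteq> 0 \<longrightarrow> (\<forall>v. v \<noteq> 0 \<longrightarrow>
        (\<Sum>i\<in>UNIV. \<Sum>j\<in>UNIV. hess (\<lambda>y. (F y)^2) \<xi> i j * v$i * v$j) > 0))"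

end

theory Submission
  imports Defs
begin

text \<open>
  Write \<open>a = \<nabla>\<^sup>2(F\<^sup>2/2) = \<nabla>F \<otimes> \<nabla>F + F \<nabla>\<^sup>2F\<close> at \<open>\<xi> = \<nabla>u \<noteq> 0\<close> and \<open>B = D\<^sup>2u\<close>. The difference of the two
  sides is \<open>F\<close> times the Frobenius product of \<open>B\<^sup>T a B\<close> with \<open>\<nabla>\<^sup>2F\<close>. Both \<open>a\<close> and \<open>\<nabla>\<^sup>2F\<close> are positive
  semidefinite: \<open>a\<close> by strong convexity, and \<open>\<nabla>\<^sup>2F\<close> because Euler's relations \<open>\<nabla>\<^sup>2F \<xi> = 0\<close> and
  \<open>\<nabla>F \<cdot> \<xi> = F > 0\<close> let one shift any test vector along \<open>\<xi>\<close> until it is orthogonal to \<open>\<nabla>F\<close>,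
  where the quadratic forms of \<open>a\<close> and \<open>F \<nabla>\<^sup>2F\<close> agree. Writing \<open>\<nabla>\<^sup>2F = \<Sum> w w\<^sup>T\<close>, the Frobenius
  product becomes \<open>\<Sum> (Bw)\<^sup>T a (Bw) \<ge> 0\<close>. Nothing about \<open>u\<close> beyond its Hessian being some
  matrix is used.
\<close>

section \<open>Positive semidefinite matrices\<close>

definition bilinear_form :: "('n::finite \<Rightarrow> 'n \<Rightarrow> real) \<Rightarrow> ('n \<Rightarrow> real) \<Rightarrow> ('n \<Rightarrow> real) \<Rightarrow> real" where
  "bilinear_form H v w = (\<Sum>i\<in>UNIV. \<Sum>j\<in>UNIV. H i j * v i * w j)"

definition sym_matrix :: "('n \<Rightarrow> 'n \<Rightarrow> real) \<Rightarrow> bool" where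
  "sym_matrix H \<longleftrightarrow> (\<forall>i j. H i j = H j i)"

definition psd_matrix :: "('n::finite \<Rightarrow> 'n \<Rightarrow> real) \<Rightarrow> bool" where
  "psd_matrix H \<longleftrightarrow> (\<forall>v. bilinear_form H v v \<ge> 0)"

definition unit_fun :: "'n \<Rightarrow> 'n \<Rightarrow> real" where
  "unit_fun j = (\<lambda>k. if k = j then 1 else 0)"

lemma bilinear_form_unit_left: "bilinear_form H (unit_fun i) w = (\<Sum>j\<in>UNIV. H i j * w j)"
  unfolding bilinear_form_def unit_fun_def
  by (subst sum.swap) (simp add: if_distrib[of "\<lambda>x. x * _"] if_distrib[of "\<lambda>x. _ * x"] cong: if_cong)

lemma bilinear_form_unit_right: "bilinear_form H v (unit_fun j) = (\<Sum>i\<in>UNIV. H i j * v i)"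
  unfolding bilinear_form_def unit_fun_def
  by (simp add: if_distrib[of "\<lambda>x. _ * x"] mult.commute cong: if_cong)

lemma bilinear_form_units: "bilinear_form H (unit_fun i) (unit_fun j) = H i j"
  by (simp add: bilinear_form_unit_left) (simp add: unit_fun_def if_distrib[of "\<lambda>x. _ * x"] cong: if_cong)

lemma bilinear_form_commute: "sym_matrix H \<Longrightarrow> bilinear_form H v w = bilinear_form H w v"
  unfolding bilinear_form_def sym_matrix_def
  by (subst sum.swap) (simp add: mult_ac)

lemma bilinear_form_kernel_right:
  "(\<And>i. (\<Sum>j\<in>UNIV. H i j * x j) = 0) \<Longrightarrow> bilinear_form H v x = 0"
  unfolding bilinear_form_def by (simp add: mult.assoc mult.left_commute[of _ "v _"] sum_distrib_left[symmetric])

lemma bilinear_form_add_scaled: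
  "bilinear_form H (\<lambda>k. v k + t * x k) (\<lambda>k. v k + t * x k)
     = bilinear_form H v v + t * bilinear_form H v x + t * bilinear_form H x v + t\<^sup>2 * bilinear_form H x x"
  unfolding bilinear_form_def
  by (simp add: algebra_simps sum.distrib sum_distrib_left power2_eq_square)

lemma bilinear_form_rank1_plus:
  "bilinear_form (\<lambda>i j. c * (w i * w j) + d * H i j) v v = c * (\<Sum>i\<in>UNIV. w i * v i)\<^sup>2 + d * bilinear_form H v v"
  unfolding bilinear_form_def power2_eq_square
  by (simp add: algebra_simps sum.distrib sum_distrib_left sum_distrib_right)

lemma psd_matrix_diag_nonneg: "psd_matrix H \<Longrightarrow> H i i \<ge> 0"
  unfolding psd_matrix_def using bilinear_form_units by metis

lemma psd_matrix_diag_zero: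
  assumes sym: "sym_matrix H" and psd: "psd_matrix H" and "H i i = 0"
  shows "H i j = 0"
proof (rule ccontr)
  assume ne: "H i j \<noteq> 0"
  define t where "t = - (H j j + 1) / (2 * H i j)"
  have "bilinear_form H (\<lambda>k. unit_fun j k + t * unit_fun i k) (\<lambda>k. unit_fun j k + t * unit_fun i k)
      = H j j + 2 * t * H i j"
    using sym \<open>H i i = 0\<close> unfolding bilinear_form_add_scaled bilinear_form_units sym_matrix_def by simp
  also have "\<dots> = -1" using ne unfolding t_def by (simp add: field_simps)
  finally show False using psd unfolding psd_matrix_def by (metis neg_0_le_iff_le not_one_le_zero)
qed

lemma psd_matrix_eliminate:
  assumes sym: "sym_matrix H" and psd: "psd_matrix H" and "H r r > 0"
  shows "psd_matrix (\<lambda>i j. H i j - H r i * H r j / H r r)"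
  unfolding psd_matrix_def
proof
  fix v
  define L where "L = (\<Sum>i\<in>UNIV. H r i * v i)"
  have "bilinear_form H (unit_fun r) v = L" "bilinear_form H v (unit_fun r) = L"
    using sym unfolding L_def bilinear_form_unit_left bilinear_form_unit_right sym_matrix_def
    by (auto simp: mult.commute)
  then have "bilinear_form H (\<lambda>k. v k + (- L / H r r) * unit_fun r k) (\<lambda>k. v k + (- L / H r r) * unit_fun r k)
      = bilinear_form H v v - L\<^sup>2 / H r r"
    using \<open>H r r > 0\<close> unfolding bilinear_form_add_scaled bilinear_form_units
    by (simp add: field_simps power2_eq_square)
  also have "\<dots> = bilinear_form (\<lambda>i j. - (1 / H r r) * (H r i * H r j) + 1 * H i j) v v"
    unfolding bilinear_form_rank1_plus L_def by simp
  also have "(\<lambda>i j. - (1 / H r r) * (H r i * H r j) + 1 * H i j) = (\<lambda>i j. H i j - H r i * H r j / H r r)"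
    by (simp add: fun_eq_iff)
  finally show "bilinear_form (\<lambda>i j. H i j - H r i * H r j / H r r) v v \<ge> 0"
    using psd unfolding psd_matrix_def by metis
qed

text \<open>Induction on the number of nonzero diagonal entries: each elimination step creates a new zero
  on the diagonal and keeps the old ones, since a zero diagonal entry forces its whole row to vanish.\<close>
lemma psd_matrix_sum_rank1:
  assumes "sym_matrix H" "psd_matrix H"
  shows "\<exists>ws. \<forall>i j. H i j = (\<Sum>w\<leftarrow>ws. w i * w j)"
  using assms
proof (induction "card {i. H i i \<noteq> 0}" arbitrary: H rule: less_induct)
  case less
  show ?case
  proof (cases "\<exists>r. H r r \<noteq> 0")
    case False
    then have "\<forall>i j. H i j = 0" using psd_matrix_diag_zero less.prems by blast
    then show ?thesis by (intro exI[of _ "[]"]) simp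
  next
    case True
    then obtain r where "H r r \<noteq> 0" by blast
    with psd_matrix_diag_nonneg[OF less.prems(2)] have "H r r > 0"
      by (simp add: order_less_le)
    define H' where "H' = (\<lambda>i j. H i j - H r i * H r j / H r r)"
    have sym': "sym_matrix H'" using less.prems(1) unfolding H'_def sym_matrix_def by (simp add: mult.commute)
    have psd': "psd_matrix H'" unfolding H'_def by (rule psd_matrix_eliminate[OF less.prems \<open>H r r > 0\<close>])
    have "H' i i = 0" if "H i i = 0" for i
      using psd_matrix_diag_zero[OF less.prems that, of r] psd_matrix_diag_zero[OF less.prems that, of i]
        less.prems(1) unfolding H'_def sym_matrix_def by simp
    moreover have "H' r r = 0" using \<open>H r r > 0\<close> unfolding H'_def by (simp add: field_simps)
    ultimately have "{i. H' i i \<noteq> 0} \<subset> {i. H i i \<noteq> 0}" using \<open>H r r \<noteq> 0\<close> by blast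
    then have "card {i. H' i i \<noteq> 0} < card {i. H i i \<noteq> 0}" by (simp add: psubset_card_mono)
    from less.hyps[OF this sym' psd'] obtain ws where ws: "\<forall>i j. H' i j = (\<Sum>w\<leftarrow>ws. w i * w j)"
      by blast
    define w0 where "w0 i = H r i / sqrt (H r r)" for i
    have "w0 i * w0 j = H r i * H r j / H r r" for i j
      unfolding w0_def using \<open>H r r > 0\<close> by (simp add: field_simps)
    then have "H i j = (\<Sum>w\<leftarrow>w0 # ws. w i * w j)" for i j
      using ws[rule_format, of i j] unfolding H'_def by simp
    then show ?thesis by blast
  qed
qed

lemma psd_matrix_drop_rank1:
  assumes psd: "psd_matrix (\<lambda>i j. f i * f j + c * H i j)" and c: "c > 0" and sym: "sym_matrix H"
    and kernel: "\<And>i. (\<Sum>j\<in>UNIV. H i j * x j) = 0" and fx: "(\<Sum>i\<in>UNIV. f i * x i) \<noteq> 0"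
  shows "psd_matrix H"
  unfolding psd_matrix_def
proof
  fix v
  define t where "t = - (\<Sum>i\<in>UNIV. f i * v i) / (\<Sum>i\<in>UNIV. f i * x i)"
  have "(\<Sum>i\<in>UNIV. f i * (v i + t * x i)) = (\<Sum>i\<in>UNIV. f i * v i) + t * (\<Sum>i\<in>UNIV. f i * x i)"
    by (simp add: algebra_simps sum.distrib sum_distrib_left)
  also have "\<dots> = 0" using fx unfolding t_def by simp
  finally have f_orth: "(\<Sum>i\<in>UNIV. f i * (v i + t * x i)) = 0" .
  have Hx: "bilinear_form H w x = 0" for w by (rule bilinear_form_kernel_right[OF kernel])
  then have "bilinear_form H x v = 0" using bilinear_form_commute[OF sym] by metis
  with Hx have "c * bilinear_form H v v
      = bilinear_form (\<lambda>i j. 1 * (f i * f j) + c * H i j) (\<lambda>k. v k + t * x k) (\<lambda>k. v k + t * x k)"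
    unfolding bilinear_form_rank1_plus f_orth bilinear_form_add_scaled by simp
  also have "\<dots> \<ge> 0" using psd unfolding psd_matrix_def by simp
  finally show "bilinear_form H v v \<ge> 0" using c by (simp add: zero_le_mult_iff)
qed

text \<open>\<open>congruence_trace A B M\<close> is the Frobenius product of \<open>B\<^sup>T A B\<close> with \<open>M\<close>.\<close>
definition congruence_trace ::
    "('n::finite \<Rightarrow> 'n \<Rightarrow> real) \<Rightarrow> ('n \<Rightarrow> 'n \<Rightarrow> real) \<Rightarrow> ('n \<Rightarrow> 'n \<Rightarrow> real) \<Rightarrow> real" where
  "congruence_trace A B M = (\<Sum>i\<in>UNIV. \<Sum>j\<in>UNIV. \<Sum>k\<in>UNIV. \<Sum>l\<in>UNIV. A i j * M k l * B i k * B j l)"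

lemma congruence_trace_add_scaled:
  "congruence_trace A B (\<lambda>k l. M k l + c * N k l) = congruence_trace A B M + c * congruence_trace A B N"
  unfolding congruence_trace_def by (simp add: algebra_simps sum.distrib sum_distrib_left)

lemma congruence_trace_rank1:
  "congruence_trace A B (\<lambda>k l. w k * w l)
     = bilinear_form A (\<lambda>i. \<Sum>k\<in>UNIV. w k * B i k) (\<lambda>i. \<Sum>k\<in>UNIV. w k * B i k)"
  unfolding congruence_trace_def bilinear_form_def
  by (simp add: algebra_simps sum_distrib_left sum_distrib_right)

lemma congruence_trace_nonneg:
  assumes "psd_matrix A" "sym_matrix M" "psd_matrix M"
  shows "congruence_trace A B M \<ge> 0"
proof -
  obtain ws where "\<forall>k l. M k l = (\<Sum>w\<leftarrow>ws. w k * w l)"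
    using psd_matrix_sum_rank1 assms(2,3) by blast
  then have M: "M = (\<lambda>k l. \<Sum>w\<leftarrow>ws. w k * w l)" by blast
  have "congruence_trace A B (\<lambda>k l. \<Sum>w\<leftarrow>ws. w k * w l) \<ge> 0"
  proof (induction ws)
    case Nil
    then show ?case unfolding congruence_trace_def by simp
  next
    case (Cons w ws)
    have "congruence_trace A B (\<lambda>k l. w k * w l) \<ge> 0"
      using assms(1) unfolding congruence_trace_rank1 psd_matrix_def by blast
    then show ?case
      using Cons.IH congruence_trace_add_scaled[of A B "\<lambda>k l. w k * w l" 1] by simp
  qed
  then show ?thesis unfolding M .
qed

lemma congruence_trace_ineq:
  fixes A H B :: "'n::finite \<Rightarrow> 'n \<Rightarrow> real"
  assumes A: "A = (\<lambda>i j. f i * f j + c * H i j)" and psd: "psd_matrix A" and c: "c > 0"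
    and sym: "sym_matrix H" and kernel: "\<And>i. (\<Sum>j\<in>UNIV. H i j * x j) = 0"
    and fx: "(\<Sum>i\<in>UNIV. f i * x i) \<noteq> 0"
  shows "congruence_trace A B (\<lambda>k l. f k * f l) \<le> congruence_trace A B A"
proof -
  have "psd_matrix H" using psd_matrix_drop_rank1 psd c sym kernel fx unfolding A by blast
  then have "congruence_trace A B H \<ge> 0" using congruence_trace_nonneg psd sym by blast
  moreover have "congruence_trace A B A = congruence_trace A B (\<lambda>k l. f k * f l) + c * congruence_trace A B H"
    using congruence_trace_add_scaled[of A B "\<lambda>k l. f k * f l" c H] unfolding A .
  ultimately show ?thesis using c by simp
qed

section \<open>Partial derivatives\<close>

lemma partial_eqI: "(f has_derivative D) (at x) \<Longrightarrow> partial j f x = D (axis j 1)"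
  unfolding partial_def using frechet_derivative_at by metis

lemma partial_eqI_local:
  assumes "open S" "x \<in> S" "\<And>y. y \<in> S \<Longrightarrow> g y = h y" "(h has_derivative D) (at x)"
  shows "partial j g x = D (axis j 1)"
  using has_derivative_transform_within_open[OF assms(4,1,2)] assms(3) partial_eqI by metis

lemma has_real_derivative_along_line:
  fixes h :: "real^'n::finite \<Rightarrow> real"
  assumes "h differentiable (at (p + s *\<^sub>R v))"
  shows "((\<lambda>\<sigma>. h (p + \<sigma> *\<^sub>R v)) has_real_derivative frechet_derivative h (at (p + s *\<^sub>R v)) v) (at s)"
proof -
  let ?D = "frechet_derivative h (at (p + s *\<^sub>R v))"
  have hD: "(h has_derivative ?D) (at (p + s *\<^sub>R v))" using assms frechet_derivative_works by blast
  have "((\<lambda>\<sigma>. p + \<sigma> *\<^sub>R v) has_derivative (\<lambda>d. d *\<^sub>R v)) (at s)"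
    by (auto intro!: derivative_eq_intros)
  from diff_chain_at[OF this hD] have "((\<lambda>\<sigma>. h (p + \<sigma> *\<^sub>R v)) has_derivative (\<lambda>d. ?D (d *\<^sub>R v))) (at s)"
    by (simp add: o_def)
  moreover have "?D (d *\<^sub>R v) = ?D v * d" for d
    using has_derivative_linear[OF hD] by (simp add: linear_scale mult.commute)
  ultimately show ?thesis unfolding has_field_derivative_def by simp
qed

lemma partial_mvt:
  fixes h :: "real^'n::finite \<Rightarrow> real"
  assumes "0 < s" and dh: "\<And>\<sigma>. \<sigma> \<in> {0..s} \<Longrightarrow> h differentiable (at (p + \<sigma> *\<^sub>R axis i 1))"
  shows "\<exists>z\<in>{0<..<s}. h (p + s *\<^sub>R axis i 1) - h p = s * partial i h (p + z *\<^sub>R axis i 1)"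
proof -
  define \<phi> where "\<phi> \<sigma> = h (p + \<sigma> *\<^sub>R axis i 1)" for \<sigma>
  have D: "(\<phi> has_real_derivative partial i h (p + \<sigma> *\<^sub>R axis i 1)) (at \<sigma>)" if "\<sigma> \<in> {0..s}" for \<sigma>
    using has_real_derivative_along_line[OF dh[OF that]] unfolding partial_def \<phi>_def .
  then have "continuous_on {0..s} \<phi>"
    by (meson DERIV_isCont continuous_at_imp_continuous_on)
  moreover have "\<phi> differentiable (at \<sigma>)" if "0 < \<sigma>" "\<sigma> < s" for \<sigma>
    using D[of \<sigma>] that real_differentiable_def by force
  ultimately obtain l z where z: "0 < z" "z < s" "(\<phi> has_real_derivative l) (at z)" "\<phi> s - \<phi> 0 = (s - 0) * l"
    using MVT[OF \<open>0 < s\<close>] by blast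
  then have "l = partial i h (p + z *\<^sub>R axis i 1)" using D[of z] DERIV_unique by force
  with z show ?thesis unfolding \<phi>_def by auto
qed

lemma partial_shift_diff:
  fixes h :: "real^'n::finite \<Rightarrow> real"
  assumes "h differentiable (at y)" "h differentiable (at (y + c))"
  shows "(\<lambda>y. h (y + c) - h y) differentiable (at y)"
    and "partial i (\<lambda>y. h (y + c) - h y) y = partial i h (y + c) - partial i h y"
proof -
  let ?D0 = "frechet_derivative h (at y)" and ?D1 = "frechet_derivative h (at (y + c))"
  have "(h has_derivative ?D0) (at y)" "(h has_derivative ?D1) (at (y + c))"
    using assms frechet_derivative_works by blast+
  moreover have "((\<lambda>y. y + c) has_derivative id) (at y)"
    by (auto intro!: derivative_eq_intros simp: id_def)
  ultimately have "((\<lambda>y. h (y + c) - h y) has_derivative (\<lambda>d. ?D1 d - ?D0 d)) (at y)"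
    using diff_chain_at[of "\<lambda>y. y + c" id y h ?D1] by (auto intro!: has_derivative_diff simp: o_def)
  then show "(\<lambda>y. h (y + c) - h y) differentiable (at y)"
    and "partial i (\<lambda>y. h (y + c) - h y) y = partial i h (y + c) - partial i h y"
    using partial_eqI unfolding differentiable_def partial_def by blast+
qed

lemma second_difference_mvt:
  fixes h :: "real^'n::finite \<Rightarrow> real" and p :: "real^'n" and i j :: 'n
  defines "q \<equiv> \<lambda>\<sigma> \<tau>. p + \<sigma> *\<^sub>R axis i 1 + \<tau> *\<^sub>R axis j 1"
  assumes "0 < s"
    and dh: "\<And>\<sigma> \<tau>. \<sigma> \<in> {0..s} \<Longrightarrow> \<tau> \<in> {0..s} \<Longrightarrow> h differentiable (at (q \<sigma> \<tau>))"
    and dP: "\<And>\<sigma> \<tau>. \<sigma> \<in> {0..s} \<Longrightarrow> \<tau> \<in> {0..s} \<Longrightarrow> partial i h differentiable (at (q \<sigma> \<tau>))"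
  shows "\<exists>\<sigma>\<in>{0<..<s}. \<exists>\<tau>\<in>{0<..<s}.
    h (q s s) - h (q s 0) - h (q 0 s) + h (q 0 0) = s * s * partial j (partial i h) (q \<sigma> \<tau>)"
proof -
  define g where "g y = h (y + s *\<^sub>R axis j 1) - h y" for y
  have q_shift: "q \<sigma> \<tau> = (p + \<sigma> *\<^sub>R axis i 1) + \<tau> *\<^sub>R axis j 1" for \<sigma> \<tau>
    unfolding q_def ..
  have s: "0 \<in> {0..s}" "s \<in> {0..s}" using \<open>0 < s\<close> by auto
  have dg: "g differentiable (at (p + \<sigma> *\<^sub>R axis i 1))"
    and Dg: "partial i g (p + \<sigma> *\<^sub>R axis i 1) = partial i h (q \<sigma> s) - partial i h (q \<sigma> 0)"
    if "\<sigma> \<in> {0..s}" for \<sigma>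
    using partial_shift_diff[of h "p + \<sigma> *\<^sub>R axis i 1" "s *\<^sub>R axis j 1"] dh[OF that s(1)] dh[OF that s(2)]
    unfolding g_def[abs_def] q_shift by simp_all
  obtain \<sigma> where \<sigma>: "\<sigma> \<in> {0<..<s}" "g (p + s *\<^sub>R axis i 1) - g p = s * partial i g (p + \<sigma> *\<^sub>R axis i 1)"
    using partial_mvt[OF \<open>0 < s\<close> dg] by blast
  then have "h (q s s) - h (q s 0) - h (q 0 s) + h (q 0 0) = s * (partial i h (q \<sigma> s) - partial i h (q \<sigma> 0))"
    using Dg[of \<sigma>] unfolding g_def q_shift by (simp add: algebra_simps)
  moreover obtain \<tau> where "\<tau> \<in> {0<..<s}"
    "partial i h (q \<sigma> s) - partial i h (q \<sigma> 0) = s * partial j (partial i h) (q \<sigma> \<tau>)"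
    using partial_mvt[OF \<open>0 < s\<close>, of "partial i h" "p + \<sigma> *\<^sub>R axis i 1" j] dP \<sigma>(1)
    unfolding q_shift by auto
  ultimately show ?thesis using \<sigma>(1) by (metis mult.assoc)
qed

text \<open>Schwarz's theorem: by \<open>second_difference_mvt\<close> both mixed partials, at points close to \<open>\<xi>\<close>,
  equal the same second difference divided by \<open>s\<^sup>2\<close>.\<close>
lemma partial_partial_commute:
  fixes h :: "real^'n::finite \<Rightarrow> real"
  assumes "open S" "\<xi> \<in> S" and dh: "\<And>y. y \<in> S \<Longrightarrow> h differentiable (at y)"
    and dPi: "\<And>y. y \<in> S \<Longrightarrow> partial i h differentiable (at y)"
    and dPj: "\<And>y. y \<in> S \<Longrightarrow> partial j h differentiable (at y)"
    and cont_ij: "isCont (partial j (partial i h)) \<xi>" and cont_ji: "isCont (partial i (partial j h)) \<xi>"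
  shows "partial j (partial i h) \<xi> = partial i (partial j h) \<xi>"
proof (rule ccontr)
  let ?A = "partial j (partial i h)" and ?B = "partial i (partial j h)"
  assume "?A \<xi> \<noteq> ?B \<xi>"
  define e where "e = \<bar>?A \<xi> - ?B \<xi>\<bar> / 2"
  have "e > 0" using \<open>?A \<xi> \<noteq> ?B \<xi>\<close> unfolding e_def by simp
  obtain r where "r > 0" "ball \<xi> r \<subseteq> S" using assms(1,2) open_contains_ball by blast
  obtain d1 where "d1 > 0" and d1: "\<And>y. dist y \<xi> < d1 \<Longrightarrow> dist (?A y) (?A \<xi>) < e"
    using cont_ij \<open>e > 0\<close> unfolding continuous_at_eps_delta by blast
  obtain d2 where "d2 > 0" and d2: "\<And>y. dist y \<xi> < d2 \<Longrightarrow> dist (?B y) (?B \<xi>) < e"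
    using cont_ji \<open>e > 0\<close> unfolding continuous_at_eps_delta by blast
  define s where "s = min r (min d1 d2) / 4"
  have "s > 0" using \<open>r > 0\<close> \<open>d1 > 0\<close> \<open>d2 > 0\<close> unfolding s_def by auto
  define q where "q \<sigma> \<tau> = \<xi> + \<sigma> *\<^sub>R axis i 1 + \<tau> *\<^sub>R axis j 1" for \<sigma> \<tau>
  have near: "dist (q \<sigma> \<tau>) \<xi> < min r (min d1 d2)" if "\<sigma> \<in> {0..s}" "\<tau> \<in> {0..s}" for \<sigma> \<tau>
  proof -
    have "dist (q \<sigma> \<tau>) \<xi> = norm (\<sigma> *\<^sub>R axis i 1 + \<tau> *\<^sub>R axis j 1 :: real^'n)"
      unfolding q_def dist_norm by simp
    also have "\<dots> \<le> norm (\<sigma> *\<^sub>R axis i 1 :: real^'n) + norm (\<tau> *\<^sub>R axis j 1 :: real^'n)"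
      by (rule norm_triangle_ineq)
    also have "\<dots> \<le> 2 * s" using that by simp
    finally show ?thesis using \<open>s > 0\<close> unfolding s_def by linarith
  qed
  then have "q \<sigma> \<tau> \<in> S" if "\<sigma> \<in> {0..s}" "\<tau> \<in> {0..s}" for \<sigma> \<tau>
    using that \<open>ball \<xi> r \<subseteq> S\<close> by (auto simp: dist_commute)
  then have inS: "h differentiable (at (q \<sigma> \<tau>)) \<and> partial i h differentiable (at (q \<sigma> \<tau>))
      \<and> partial j h differentiable (at (q \<sigma> \<tau>))" if "\<sigma> \<in> {0..s}" "\<tau> \<in> {0..s}" for \<sigma> \<tau>
    using that dh dPi dPj by blast
  have swap: "\<xi> + \<tau> *\<^sub>R axis j 1 + \<sigma> *\<^sub>R axis i 1 = q \<sigma> \<tau>" for \<sigma> \<tau>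
    unfolding q_def by (simp add: algebra_simps)
  obtain \<sigma> \<tau> where "\<sigma> \<in> {0<..<s}" "\<tau> \<in> {0<..<s}"
    "h (q s s) - h (q s 0) - h (q 0 s) + h (q 0 0) = s * s * ?A (q \<sigma> \<tau>)"
    using second_difference_mvt[OF \<open>s > 0\<close>, of h \<xi> i j] inS unfolding q_def by blast
  moreover obtain \<tau>' \<sigma>' where "\<tau>' \<in> {0<..<s}" "\<sigma>' \<in> {0<..<s}"
    "h (q s s) - h (q 0 s) - h (q s 0) + h (q 0 0) = s * s * ?B (q \<sigma>' \<tau>')"
    using second_difference_mvt[OF \<open>s > 0\<close>, of h \<xi> j i] inS unfolding swap by blast
  ultimately have "s * s * ?A (q \<sigma> \<tau>) = s * s * ?B (q \<sigma>' \<tau>')" by linarith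
  then have "?A (q \<sigma> \<tau>) = ?B (q \<sigma>' \<tau>')" using \<open>s > 0\<close> by simp
  moreover have "dist (?A (q \<sigma> \<tau>)) (?A \<xi>) < e" "dist (?B (q \<sigma>' \<tau>')) (?B \<xi>) < e"
    using d1 d2 near \<open>\<sigma> \<in> _\<close> \<open>\<tau> \<in> _\<close> \<open>\<sigma>' \<in> _\<close> \<open>\<tau>' \<in> _\<close> by auto
  ultimately show False unfolding e_def dist_real_def by (auto simp: abs_if split: if_splits)
qed

lemma Ck_on_Suc_imp_Ck_on: "Ck_on (Suc k) S f \<Longrightarrow> Ck_on k S f"
proof (induction k arbitrary: f)
  case 0
  then show ?case
    by (auto intro!: continuous_at_imp_continuous_on differentiable_imp_continuous_within)
next
  case (Suc k)
  then show ?case by (metis Ck_on.simps(2))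
qed

lemma Ck_on_2D:
  assumes "Ck_on 2 S f" "open S" "y \<in> S"
  shows "f differentiable (at y)" "partial i f differentiable (at y)"
    and "isCont (partial j (partial i f)) y"
  using assms by (auto simp: numeral_2_eq_2 continuous_on_eq_continuous_at)

lemma hess_symmetric:
  assumes "Ck_on 2 S f" "open S" "\<xi> \<in> S"
  shows "sym_matrix (hess f \<xi>)"
  unfolding sym_matrix_def hess_def
proof (intro allI)
  fix i j
  show "partial j (partial i f) \<xi> = partial i (partial j f) \<xi>"
    by (rule partial_partial_commute[OF assms(2,3)]) (use Ck_on_2D[OF assms(1,2)] assms(3) in blast)+
qed

lemma sum_partial_mult:
  fixes h :: "real^'n::finite \<Rightarrow> real"
  assumes "h differentiable (at \<xi>)"
  shows "(\<Sum>i\<in>UNIV. partial i h \<xi> * v$i) = frechet_derivative h (at \<xi>) v"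
proof -
  have "linear (frechet_derivative h (at \<xi>))"
    using assms frechet_derivative_works has_derivative_linear by blast
  then have "frechet_derivative h (at \<xi>) (\<Sum>i\<in>UNIV. v$i *\<^sub>R axis i 1) = (\<Sum>i\<in>UNIV. v$i * partial i h \<xi>)"
    unfolding partial_def by (simp add: linear_sum linear_scale)
  then show ?thesis using basis_expansion[of v] by (simp add: scalar_mult_eq_scaleR mult.commute)
qed

lemma euler_homogeneous:
  fixes h :: "real^'n::finite \<Rightarrow> real"
  assumes "h differentiable (at \<xi>)" and hom: "\<And>t. t > 0 \<Longrightarrow> h (t *\<^sub>R \<xi>) = t ^ k * h \<xi>"
  shows "(\<Sum>i\<in>UNIV. partial i h \<xi> * \<xi>$i) = real k * h \<xi>"
proof -
  have "((\<lambda>t. h (0 + t *\<^sub>R \<xi>)) has_real_derivative frechet_derivative h (at \<xi>) \<xi>) (at 1)"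
    using has_real_derivative_along_line[of h 0 1 \<xi>] assms(1) by simp
  moreover have "((\<lambda>t. t ^ k * h \<xi>) has_real_derivative real k * h \<xi>) (at 1)"
    by (auto intro!: derivative_eq_intros)
  then have "((\<lambda>t. h (0 + t *\<^sub>R \<xi>)) has_real_derivative real k * h \<xi>) (at 1)"
    by (rule has_field_derivative_transform_within_open[of _ _ _ "{0<..}"]) (use hom in auto)
  ultimately show ?thesis using sum_partial_mult[OF assms(1)] DERIV_unique by metis
qed

lemma partial_homogeneous:
  fixes F :: "real^'n::finite \<Rightarrow> real"
  assumes "t > 0" and hom: "\<And>z. F (t *\<^sub>R z) = t * F z"
    and "F differentiable (at \<xi>)" "F differentiable (at (t *\<^sub>R \<xi>))"
  shows "partial i F (t *\<^sub>R \<xi>) = partial i F \<xi>"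
proof -
  let ?D0 = "frechet_derivative F (at \<xi>)" and ?D1 = "frechet_derivative F (at (t *\<^sub>R \<xi>))"
  have D0: "(F has_derivative ?D0) (at \<xi>)" and D1: "(F has_derivative ?D1) (at (t *\<^sub>R \<xi>))"
    using assms(3,4) frechet_derivative_works by blast+
  have "((\<lambda>z. t *\<^sub>R z) has_derivative (\<lambda>d. t *\<^sub>R d)) (at \<xi>)"
    by (auto intro!: derivative_eq_intros)
  from diff_chain_at[OF this D1] have "((\<lambda>z. t * F z) has_derivative (\<lambda>d. ?D1 (t *\<^sub>R d))) (at \<xi>)"
    using hom by (simp add: o_def)
  moreover have "((\<lambda>z. t * F z) has_derivative (\<lambda>d. t * ?D0 d)) (at \<xi>)"
    using D0 by (auto intro!: derivative_eq_intros)
  ultimately have "?D1 (t *\<^sub>R axis i 1) = t * ?D0 (axis i 1)"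
    using has_derivative_unique by metis
  then show ?thesis
    using \<open>t > 0\<close> linear_scale[OF has_derivative_linear[OF D1]] unfolding partial_def by simp
qed

lemma hess_scaled_square:
  fixes F :: "real^'n::finite \<Rightarrow> real"
  assumes "open S" "\<xi> \<in> S" and dF: "\<And>y. y \<in> S \<Longrightarrow> F differentiable (at y)"
    and dP: "\<And>y. y \<in> S \<Longrightarrow> partial i F differentiable (at y)"
  shows "hess (\<lambda>y. c * (F y)\<^sup>2) \<xi> i j = 2 * c * (partial i F \<xi> * partial j F \<xi> + F \<xi> * hess F \<xi> i j)"
proof -
  have "partial i (\<lambda>y. c * (F y)\<^sup>2) y = 2 * c * (F y * partial i F y)" if "y \<in> S" for y
  proof -
    have "(F has_derivative frechet_derivative F (at y)) (at y)"
      using dF[OF that] frechet_derivative_works by blast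
    then have "((\<lambda>y. c * (F y * F y)) has_derivative
        (\<lambda>d. c * (F y * frechet_derivative F (at y) d + frechet_derivative F (at y) d * F y))) (at y)"
      by (intro has_derivative_mult_right has_derivative_mult)
    from partial_eqI[OF this, of i] show ?thesis
      unfolding power2_eq_square partial_def[of i F] by (simp add: algebra_simps)
  qed
  moreover have "((\<lambda>y. 2 * c * (F y * partial i F y)) has_derivative
      (\<lambda>d. 2 * c * (F \<xi> * frechet_derivative (partial i F) (at \<xi>) d
        + frechet_derivative F (at \<xi>) d * partial i F \<xi>))) (at \<xi>)"
    using dF dP \<open>\<xi> \<in> S\<close> frechet_derivative_works
    by (intro has_derivative_mult_right has_derivative_mult) blast+
  ultimately show ?thesis
    unfolding hess_def using partial_eqI_local[OF assms(1,2)]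
    by (simp add: partial_def algebra_simps)
qed

section \<open>Hessians of norms\<close>

lemma norm_euler:
  assumes "is_norm_fn F" "Ck_on 2 (UNIV - {0}) F" "\<xi> \<noteq> 0"
  shows "(\<Sum>i\<in>UNIV. partial i F \<xi> * \<xi>$i) = F \<xi>"
  using euler_homogeneous[of F \<xi> 1] assms Ck_on_2D[OF assms(2)] unfolding is_norm_fn_def
  by (simp add: open_delete)

lemma hess_norm_kernel:
  assumes "is_norm_fn F" "Ck_on 2 (UNIV - {0}) F" "\<xi> \<noteq> 0"
  shows "(\<Sum>j\<in>UNIV. hess F \<xi> i j * \<xi>$j) = 0"
proof -
  have hom: "F (t *\<^sub>R z) = t * F z" if "t > 0" for t z
    using assms(1) that unfolding is_norm_fn_def by blast
  have "partial i F (t *\<^sub>R \<xi>) = t ^ 0 * partial i F \<xi>" if "t > 0" for t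
    using partial_homogeneous[of t F \<xi> i] hom Ck_on_2D[OF assms(2)] assms(3) that by (simp add: open_delete)
  then show ?thesis
    using euler_homogeneous[of "partial i F" \<xi> 0] Ck_on_2D[OF assms(2)] assms(3)
    unfolding hess_def by (simp add: open_delete)
qed

lemma hess_half_square_norm:
  assumes "Ck_on 2 (UNIV - {0}) F" "\<xi> \<noteq> 0"
  shows "hess (\<lambda>y. (F y)\<^sup>2 / 2) \<xi> = (\<lambda>i j. partial i F \<xi> * partial j F \<xi> + F \<xi> * hess F \<xi> i j)"
  using hess_scaled_square[of "UNIV - {0}" \<xi> F _ "1/2"] Ck_on_2D[OF assms(1)] assms(2)
  by (auto simp: fun_eq_iff open_delete)

lemma hess_half_square_psd:
  assumes "strongly_convex_norm F" "Ck_on 2 (UNIV - {0}) F" "\<xi> \<noteq> 0"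
  shows "psd_matrix (hess (\<lambda>y. (F y)\<^sup>2 / 2) \<xi>)"
  unfolding psd_matrix_def
proof
  fix w :: "'a \<Rightarrow> real"
  have "hess (\<lambda>y. (F y)\<^sup>2) \<xi> i j = 2 * hess (\<lambda>y. (F y)\<^sup>2 / 2) \<xi> i j" for i j
    using hess_scaled_square[of "UNIV - {0}" \<xi> F _ 1] hess_scaled_square[of "UNIV - {0}" \<xi> F _ "1/2"]
      Ck_on_2D[OF assms(2)] assms(3) by (simp add: open_delete)
  then have expand: "(\<Sum>i\<in>UNIV. \<Sum>j\<in>UNIV. hess (\<lambda>y. (F y)\<^sup>2) \<xi> i j * (\<chi> k. w k)$i * (\<chi> k. w k)$j)
      = 2 * bilinear_form (hess (\<lambda>y. (F y)\<^sup>2 / 2) \<xi>) w w"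
    unfolding bilinear_form_def by (simp add: sum_distrib_left mult_ac)
  show "bilinear_form (hess (\<lambda>y. (F y)\<^sup>2 / 2) \<xi>) w w \<ge> 0"
  proof (cases "w = (\<lambda>k. 0)")
    case False
    then have "(\<chi> k. w k) \<noteq> 0" by (auto simp: vec_eq_iff)
    with assms(1,3) expand show ?thesis unfolding strongly_convex_norm_def by force
  qed (simp add: bilinear_form_def)
qed

theorem lemma2p3:
  fixes F :: "real^'n::finite \<Rightarrow> real" and u :: "real^'n \<Rightarrow> real"
    and U :: "(real^'n) set" and x :: "real^'n"
  assumes "strongly_convex_norm F"
    and "Ck_on 3 (UNIV - {0}) F"
    and "open U"
    and "Ck_on 2 U u"
    and "x \<in> U"
    and "grad u x \<noteq> 0"
  shows "(let \<xi> = grad u x;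
              a = hess (\<lambda>y. (F y)^2 / 2) \<xi>;
              Fd = (\<lambda>i. partial i F \<xi>);
              D2u = hess u x
          in (\<Sum>i\<in>UNIV. \<Sum>j\<in>UNIV. \<Sum>k\<in>UNIV. \<Sum>l\<in>UNIV.
                a i j * a k l * D2u i k * D2u j l)
           \<ge> (\<Sum>i\<in>UNIV. \<Sum>j\<in>UNIV. \<Sum>k\<in>UNIV. \<Sum>l\<in>UNIV.
                a i j * Fd k * Fd l * D2u i k * D2u j l))"
proof -
  define \<xi> where "\<xi> = grad u x"
  define a where "a = hess (\<lambda>y. (F y)\<^sup>2 / 2) \<xi>"
  define f where "f i = partial i F \<xi>" for i
  have "\<xi> \<noteq> 0" using assms(6) unfolding \<xi>_def .
  have norm: "is_norm_fn F" using assms(1) unfolding strongly_convex_norm_def by blast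
  have C2: "Ck_on 2 (UNIV - {0}) F"
    using Ck_on_Suc_imp_Ck_on[of 2] assms(2) by (simp add: numeral_3_eq_3 numeral_2_eq_2 del: Ck_on.simps)
  have "F \<xi> > 0" using norm \<open>\<xi> \<noteq> 0\<close> unfolding is_norm_fn_def by blast
  have "congruence_trace a (hess u x) (\<lambda>k l. f k * f l) \<le> congruence_trace a (hess u x) a"
  proof (rule congruence_trace_ineq)
    show "a = (\<lambda>i j. f i * f j + F \<xi> * hess F \<xi> i j)"
      unfolding a_def f_def using hess_half_square_norm[OF C2 \<open>\<xi> \<noteq> 0\<close>] .
    show "psd_matrix a" unfolding a_def using hess_half_square_psd[OF assms(1) C2 \<open>\<xi> \<noteq> 0\<close>] .
    show "sym_matrix (hess F \<xi>)" using hess_symmetric[OF C2] \<open>\<xi> \<noteq> 0\<close> by (simp add: open_delete)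
    show "(\<Sum>j\<in>UNIV. hess F \<xi> i j * \<xi>$j) = 0" for i using hess_norm_kernel[OF norm C2 \<open>\<xi> \<noteq> 0\<close>] .
    show "(\<Sum>i\<in>UNIV. f i * \<xi>$i) \<noteq> 0"
      using norm_euler[OF norm C2 \<open>\<xi> \<noteq> 0\<close>] \<open>F \<xi> > 0\<close> unfolding f_def by simp
  qed fact
  then show ?thesis
    unfolding Let_def congruence_trace_def \<xi>_def[symmetric] a_def[symmetric] f_def by (simp add: mult.assoc)
qed

end
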